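(* Let $(X,\mu)$ be a non-atomic probability measure space, $\mathcal{T}$ a tree on $X$, $\mathcal{M}=\mathcal{M}_{\mathcal{T}}$ the associated maximal operator, and $p>1$. For $0<f\le F$ and $\lambda>0$ define $$B(f,F,\lambda)=\sup\Big\{\mu(\{x:\mathcal{M}\phi(x)\ge\lambda\}) : \phi\ge 0 \text{ measurable},\ \int_X\phi\,d\mu=f,\ |||\phi|||_{p,\infty}\le F\Big\}.$$ Then $B(f,F,\lambda)=\min(1,f/\lambda,F^p/\lambda^p)$; that is, $B=1$ for $0<\lambda\le f$, $B=f/\lambda$ for $f<\lambda\le (F^p/f)^{1/(p-1)}$, and $B=F^p/\lambda^p$ for $\lambda>(F^p/f)^{1/(p-1)}$.
   Context: Two measurable sets $A,B$ are almost disjoint if $\mu(A\cap B)=0$. A tree on $(X,\mu)$ is a set $\mathcal{T}$ of measurable subsets of $X$ such that: (i) $X\in\mathcal{T}$ and $\mu(I)>0$ for every $I\in\mathcal{T}$; (ii) every $I\in\mathcal{T}$ has an associated finite subset $\mathcal{C}(I)\subseteq\mathcal{T}$ with at least two elements, whose elements are pairwise almost disjoint subsets of $I$ with union $I$; (iii) $\mathcal{T}=\bigcup_{m\ge0}\mathcal{T}_{(m)}$ where $\mathcal{T}_{(0)}=\{X\}$ and $\mathcal{T}_{(m+1)}=\bigcup_{I\in\mathcal{T}_{(m)}}\mathcal{C}(I)$; (iv) $\lim_{m\to\infty}\sup_{I\in\mathcal{T}_{(m)}}\mu(I)=0$. The associated maximal operator is, for $\phi\in L^1(X,\mu)$, $\mathcal{M}_{\mathcal{T}}\phi(x)=\sup\{\frac{1}{\mu(I)}\int_I|\phi|\,d\mu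 : x\in I\in\mathcal{T}\}$. For measurable $\phi$, $|||\phi|||_{p,\infty}=\sup\{\mu(E)^{-1+1/p}\int_E|\phi|\,d\mu : E\subseteq X \text{ measurable}, \mu(E)>0\}$. *)

theory Defs
  imports "HOL-Probability.Probability"
begin

definition nonatomic :: "'a measure \<Rightarrow> bool" where
  "nonatomic M \<longleftrightarrow> (\<forall>A\<in>sets M. 0 < emeasure M A \<longrightarrow>
     (\<exists>B\<in>sets M. B \<subseteq> A \<and> 0 < emeasure M B \<and> emeasure M B < emeasure M A))"

definition almost_disjoint :: "'a measure \<Rightarrow> 'a set \<Rightarrow> 'a set \<Rightarrow> bool" where
  "almost_disjoint M A B \<longleftrightarrow> emeasure M (A \<inter> B) = 0"

fun tree_level :: "'a measure \<Rightarrow> ('a set \<Rightarrow> 'a set set) \<Rightarrow> nat \<Rightarrow> 'a set set" where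
  "tree_level M C 0 = {space M}"
| "tree_level M C (Suc m) = \<Union> (C ` tree_level M C m)"

definition tree_on :: "'a measure \<Rightarrow> 'a set set \<Rightarrow> ('a set \<Rightarrow> 'a set set) \<Rightarrow> bool" where
  "tree_on M T C \<longleftrightarrow>
     space M \<in> T \<and>
     (\<forall>I\<in>T. I \<in> sets M \<and> measure M I > 0) \<and>
     (\<forall>I\<in>T. finite (C I) \<and> card (C I) \<ge> 2 \<and> C I \<subseteq> T \<and> (\<forall>J\<in>C I. J \<subseteq> I)
            \<and> pairwise (almost_disjoint M) (C I) \<and> \<Union> (C I) = I) \<and>
     T = (\<Union>m. tree_level M C m) \<and>
     (\<lambda>m. Sup (measure M ` tree_level M C m)) \<longlonglongrightarrow> 0"

definition max_op :: "'a measure \<Rightarrow> 'a set set \<Rightarrow> ('a \<Rightarrow> real) \<Rightarrow> 'a \<Rightarrow> ennreal" where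
  "max_op M T \<phi> x = (SUP I \<in> {I \<in> T. x \<in> I}.
      (\<integral>\<^sup>+ y \<in> I. ennreal \<bar>\<phi> y\<bar> \<partial>M) / ennreal (measure M I))"

definition weak_norm :: "'a measure \<Rightarrow> real \<Rightarrow> ('a \<Rightarrow> real) \<Rightarrow> ennreal" where
  "weak_norm M p \<phi> = (SUP E \<in> {E \<in> sets M. measure M E > 0}.
      ennreal (measure M E powr (-1 + 1/p)) * (\<integral>\<^sup>+ y \<in> E. ennreal \<bar>\<phi> y\<bar> \<partial>M))"

definition Bellman :: "'a measure \<Rightarrow> 'a set set \<Rightarrow> real \<Rightarrow> real \<Rightarrow> real \<Rightarrow> real \<Rightarrow> real" where
  "Bellman M T p f F lam = Sup ((\<lambda>\<phi>. measure M {x \<in> space M. max_op M T \<phi> x \<ge> ennreal lam}) `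
      {\<phi>. \<phi> \<in> borel_measurable M \<and> (\<forall>x\<in>space M. \<phi> x \<ge> 0)
           \<and> (\<integral>\<^sup>+ x. ennreal (\<phi> x) \<partial>M) = ennreal f \<and> weak_norm M p \<phi> \<le> ennreal F})"

end

theory Submission
  imports Defs
begin

(* Fix an admissible phi (nonnegative, integral f, weak norm at most F) and
   0 < t < lam.  Every point with M phi >= lam lies in a tree set whose average exceeds t.
   Selecting, depth by depth, the maximal such sets yields an increasing sequence of
   "stopping unions" V n; since children of a tree set are almost disjoint, each V n still
   has average at least t.  Hence t mu(V n) <= f and, by the weak norm, t mu(V n)^(1/p) <= F.
   Letting n -> infinity and then t -> lam gives the bound.

   If lam <= f the constant f is admissible with M phi >= lam everywhere.
   Otherwise the levels of the tree become arbitrarily fine, so for each value below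
   beta = min(f/lam, F^p/lam^p) some finite union E of tree sets has measure between that
   value and beta.  The function equal to lam on E and to the constant c making the integral
   f elsewhere is admissible (its weak norm is controlled by concavity of s^(1-1/p)), and
   its maximal function is >= lam on E. *)

section \<open>Real inequalities for the extremal two-valued function\<close>

lemma powr_concave:
  assumes "0 < q" "q \<le> 1"
  shows "concave_on {0<..} (\<lambda>x::real. x powr q)"
proof (rule f''_le0_imp_concave[where f'="\<lambda>x. q * x powr (q - 1)"
      and f''="\<lambda>x. q * ((q - 1) * x powr (q - 1 - 1))"])
  fix x :: real assume x: "x \<in> {0<..}"
  show "DERIV (\<lambda>x. x powr q) x :> q * x powr (q - 1)"
    using x by (auto intro!: derivative_eq_intros)
  show "DERIV (\<lambda>x. q * x powr (q - 1)) x :> q * ((q - 1) * x powr (q - 1 - 1))"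
    using x by (auto intro!: derivative_eq_intros)
  show "q * ((q - 1) * x powr (q - 1 - 1)) \<le> 0"
    using assms x by (intro mult_nonneg_nonpos mult_nonpos_nonneg) auto
qed auto

text \<open>The affine function s \<mapsto> c s + (lam - c) b takes the values lam b and f at s = b
  and s = 1, both dominated by F s^(1-1/p); by concavity it stays below that curve
  on [b, 1].\<close>
lemma chord_below_power:
  fixes p lam c b f F s :: real
  assumes p: "p > 1" and c: "0 \<le> c" "c \<le> lam" and b: "0 < b" "b < 1"
    and f_eq: "lam * b + c * (1 - b) = f" and fF: "f \<le> F"
    and bF: "lam * b powr (1/p) \<le> F" and s: "b \<le> s" "s \<le> 1"
  shows "c * s + (lam - c) * b \<le> F * s powr (1 - 1/p)"
proof -
  define \<theta> where "\<theta> = (s - b) / (1 - b)"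
  have \<theta>: "0 \<le> \<theta>" "\<theta> \<le> 1" using s b by (auto simp: \<theta>_def field_simps)
  have "\<theta> * (1 - b) = s - b" using b by (simp add: \<theta>_def)
  then have s_eq: "s = (1 - \<theta>) * b + \<theta> * 1" by (simp add: algebra_simps)
  have q: "0 < 1 - 1/p" "1 - 1/p \<le> 1" using p by (auto simp: field_simps)
  have F0: "0 \<le> F" using f_eq fF b c by (smt (verit) mult_nonneg_nonneg)
  have chord: "c * s + (lam - c) * b = (1 - \<theta>) * (lam * b) + \<theta> * f"
    unfolding s_eq f_eq[symmetric] by (simp add: algebra_simps)
  have lam_b: "lam * b \<le> F * b powr (1 - 1/p)"
  proof -
    have "lam * b = lam * b powr (1/p) * b powr (1 - 1/p)"
      using b by (simp add: mult.assoc powr_add[symmetric])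
    also have "\<dots> \<le> F * b powr (1 - 1/p)" using bF by (simp add: mult_right_mono)
    finally show ?thesis .
  qed
  have concave: "(1 - \<theta>) * b powr (1 - 1/p) + \<theta> \<le> s powr (1 - 1/p)"
    using concave_onD[OF powr_concave[OF q], of \<theta> b 1] \<theta> b s_eq by auto
  have "(1 - \<theta>) * (lam * b) + \<theta> * f \<le> (1 - \<theta>) * (F * b powr (1 - 1/p)) + \<theta> * F"
    using \<theta> lam_b fF by (intro add_mono mult_left_mono) auto
  also have "\<dots> = F * ((1 - \<theta>) * b powr (1 - 1/p) + \<theta>)" by (simp add: algebra_simps)
  also have "\<dots> \<le> F * s powr (1 - 1/p)" using concave F0 by (rule mult_left_mono)
  finally show ?thesis using chord by simp
qed

text \<open>The weak-norm quotient of the two-valued function (lam on a set of measure b,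
  c elsewhere) on a set meeting the first part in measure a and the second in measure d
  is at most F.\<close>
lemma two_level_weak_bound:
  fixes p lam c b f F a d :: real
  assumes p: "p > 1" and c: "0 \<le> c" "c \<le> lam" and b: "0 < b" "b < 1"
    and f_eq: "lam * b + c * (1 - b) = f" and fF: "f \<le> F"
    and bF: "lam * b powr (1/p) \<le> F"
    and a: "0 \<le> a" "a \<le> b" and d: "0 \<le> d" and s: "0 < a + d" "a + d \<le> 1"
  shows "(a + d) powr (-1 + 1/p) * (lam * a + c * d) \<le> F"
proof -
  define s where "s = a + d"
  have s_pos: "s > 0" using s s_def by auto
  have mass: "lam * a + c * d = c * s + (lam - c) * a" unfolding s_def by (simp add: algebra_simps)
  have "lam * a + c * d \<le> F * s powr (1 - 1/p)"
  proof (cases "s \<le> b")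
    case True
    have "lam * a + c * d \<le> lam * s"
      using mult_left_mono[of a s "lam - c"] c d unfolding mass s_def by (simp add: algebra_simps)
    also have "\<dots> = lam * s powr (1/p) * s powr (1 - 1/p)"
      using s_pos by (simp add: mult.assoc powr_add[symmetric])
    also have "\<dots> \<le> lam * b powr (1/p) * s powr (1 - 1/p)"
      using True s_pos c p by (intro mult_right_mono mult_left_mono powr_mono2) auto
    also have "\<dots> \<le> F * s powr (1 - 1/p)" using bF by (rule mult_right_mono) simp
    finally show ?thesis .
  next
    case False
    have "lam * a + c * d \<le> c * s + (lam - c) * b"
      unfolding mass using c a by (simp add: mult_left_mono)
    also have "\<dots> \<le> F * s powr (1 - 1/p)"
      using chord_below_power[OF p c b f_eq fF bF] False s s_def by simp
    finally show ?thesis .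
  qed
  then have "s powr (-1 + 1/p) * (lam * a + c * d) \<le> s powr (-1 + 1/p) * (F * s powr (1 - 1/p))"
    by (simp add: mult_left_mono)
  also have "\<dots> = F" using s_pos by (simp add: powr_add[symmetric])
  finally show ?thesis unfolding s_def .
qed

lemma nn_set_integral_sum_le_UN:
  fixes A :: "'i \<Rightarrow> 'a set" and g :: "'a \<Rightarrow> ennreal"
  assumes J: "finite J" and A: "\<And>j. j \<in> J \<Longrightarrow> A j \<in> sets M"
    and null: "\<And>i j. i \<in> J \<Longrightarrow> j \<in> J \<Longrightarrow> i \<noteq> j \<Longrightarrow> A i \<inter> A j \<in> null_sets M"
    and g: "g \<in> borel_measurable M"
  shows "(\<Sum>j\<in>J. \<integral>\<^sup>+ x \<in> A j. g x \<partial>M) \<le> (\<integral>\<^sup>+ x \<in> (\<Union>j\<in>J. A j). g x \<partial>M)"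
proof -
  have AE_single: "AE x in M. \<forall>i\<in>J. \<forall>j\<in>J. i \<noteq> j \<longrightarrow> x \<notin> A i \<inter> A j"
  proof (intro AE_finite_allI J)
    fix i j assume "i \<in> J" "j \<in> J"
    show "AE x in M. i \<noteq> j \<longrightarrow> x \<notin> A i \<inter> A j"
      using AE_not_in[OF null[OF \<open>i \<in> J\<close> \<open>j \<in> J\<close>]] by (cases "i = j") auto
  qed
  have "(\<Sum>j\<in>J. \<integral>\<^sup>+ x \<in> A j. g x \<partial>M) = (\<integral>\<^sup>+ x. (\<Sum>j\<in>J. g x * indicator (A j) x) \<partial>M)"
    using A g by (subst nn_integral_sum) auto
  also have "\<dots> \<le> (\<integral>\<^sup>+ x \<in> (\<Union>j\<in>J. A j). g x \<partial>M)"
  proof (rule nn_integral_mono_AE, use AE_single in \<open>rule eventually_mono\<close>)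
    fix x assume single: "\<forall>i\<in>J. \<forall>j\<in>J. i \<noteq> j \<longrightarrow> x \<notin> A i \<inter> A j"
    show "(\<Sum>j\<in>J. g x * indicator (A j) x) \<le> g x * indicator (\<Union>j\<in>J. A j) x"
    proof (cases "\<exists>j\<in>J. x \<in> A j")
      case True
      then obtain j0 where j0: "j0 \<in> J" "x \<in> A j0" by blast
      have "(\<Sum>j\<in>J. g x * indicator (A j) x)
          = g x * indicator (A j0) x + (\<Sum>j\<in>J - {j0}. g x * indicator (A j) x)"
        using J j0(1) by (rule sum.remove)
      also have "(\<Sum>j\<in>J - {j0}. g x * indicator (A j) x) = 0"
        using single j0 by (intro sum.neutral) (auto simp: indicator_def)
      finally show ?thesis using j0 by (auto simp: indicator_def)
    qed simp
  qed
  finally show ?thesis .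
qed

section \<open>Descendants and stopping unions in a tree\<close>

fun descendants :: "('a set \<Rightarrow> 'a set set) \<Rightarrow> 'a set \<Rightarrow> nat \<Rightarrow> 'a set set" where
  "descendants C K 0 = {K}"
| "descendants C K (Suc n) = (\<Union>J\<in>C K. descendants C J n)"

text \<open>The union of the maximal selected sets (those in G) among the descendants of K up to
  depth n: a stopping-time construction.\<close>
fun stop_union :: "'a set set \<Rightarrow> ('a set \<Rightarrow> 'a set set) \<Rightarrow> 'a set \<Rightarrow> nat \<Rightarrow> 'a set" where
  "stop_union G C K 0 = (if K \<in> G then K else {})"
| "stop_union G C K (Suc n) = (if K \<in> G then K else (\<Union>J\<in>C K. stop_union G C J n))"

lemma descendants_Suc: "descendants C K (Suc n) = \<Union> (C ` descendants C K n)"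
proof (induction n arbitrary: K)
  case (Suc n)
  have "descendants C K (Suc (Suc n)) = (\<Union>J\<in>C K. \<Union> (C ` descendants C J n))"
    using Suc by (simp only: descendants.simps)
  also have "\<dots> = \<Union> (C ` descendants C K (Suc n))" by (simp only: descendants.simps) blast
  finally show ?case .
qed simp

lemma tree_level_eq_descendants: "tree_level M C m = descendants C (space M) m"
  by (induction m) (auto simp: descendants_Suc simp del: descendants.simps(2))

lemma stop_union_incseq: "incseq (\<lambda>n. stop_union G C K n)"
proof (rule incseq_SucI)
  show "stop_union G C K n \<subseteq> stop_union G C K (Suc n)" for n
  proof (induction n arbitrary: K)
    case (Suc n)
    then show ?case by (auto simp only: stop_union.simps split: if_splits)
  qed auto
qed

definition admissible :: "'a measure \<Rightarrow> real \<Rightarrow> real \<Rightarrow> real \<Rightarrow> ('a \<Rightarrow> real) \<Rightarrow> bool" where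
  "admissible M p f F \<phi> \<longleftrightarrow> \<phi> \<in> borel_measurable M \<and> (\<forall>x\<in>space M. \<phi> x \<ge> 0)
     \<and> (\<integral>\<^sup>+ x. ennreal (\<phi> x) \<partial>M) = ennreal f \<and> weak_norm M p \<phi> \<le> ennreal F"

definition level_set :: "'a measure \<Rightarrow> 'a set set \<Rightarrow> ('a \<Rightarrow> real) \<Rightarrow> real \<Rightarrow> 'a set" where
  "level_set M T \<phi> lam = {x \<in> space M. max_op M T \<phi> x \<ge> ennreal lam}"

lemma Bellman_eq_Sup_admissible:
  "Bellman M T p f F lam = Sup ((\<lambda>\<phi>. measure M (level_set M T \<phi> lam)) ` Collect (admissible M p f F))"
  unfolding Bellman_def admissible_def level_set_def by simp

context prob_space
begin

lemma weak_type_bounds: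
  fixes f F p t :: real and V :: "'a set"
  assumes adm: "admissible M p f F phi" and p: "p > 1" and f: "f \<ge> 0" and F: "F \<ge> 0"
    and t: "t > 0" and V: "V \<in> sets M"
    and avg: "ennreal t * emeasure M V \<le> (\<integral>\<^sup>+ y \<in> V. ennreal \<bar>phi y\<bar> \<partial>M)"
  shows "measure M V \<le> f / t" "measure M V \<le> F powr p / t powr p"
proof -
  have nn: "\<forall>x\<in>space M. phi x \<ge> 0" and int: "(\<integral>\<^sup>+ x. ennreal (phi x) \<partial>M) = ennreal f"
    and wn: "weak_norm M p phi \<le> ennreal F"
    using adm by (auto simp: admissible_def)
  have avg': "ennreal (t * measure M V) \<le> (\<integral>\<^sup>+ y \<in> V. ennreal \<bar>phi y\<bar> \<partial>M)"
    using avg t by (simp add: emeasure_eq_measure ennreal_mult)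
  have "(\<integral>\<^sup>+ y \<in> V. ennreal \<bar>phi y\<bar> \<partial>M) \<le> (\<integral>\<^sup>+ x. ennreal (phi x) \<partial>M)"
    using nn by (intro nn_integral_mono) (auto simp: indicator_def)
  with avg' int have "t * measure M V \<le> f" using f by (metis ennreal_le_iff order_trans)
  then show "measure M V \<le> f / t" using t by (simp add: field_simps)
  show "measure M V \<le> F powr p / t powr p"
  proof (cases "measure M V = 0")
    case True then show ?thesis using F t by simp
  next
    case False
    then have mV: "measure M V > 0" using measure_nonneg[of M V] by linarith
    have "ennreal (measure M V powr (-1 + 1/p)) * ennreal (t * measure M V)
        \<le> ennreal (measure M V powr (-1 + 1/p)) * (\<integral>\<^sup>+ y \<in> V. ennreal \<bar>phi y\<bar> \<partial>M)"
      using avg' by (rule mult_left_mono) simp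
    also have "\<dots> \<le> weak_norm M p phi"
      unfolding weak_norm_def using V mV by (intro SUP_upper) auto
    finally have "ennreal (measure M V powr (-1 + 1/p) * (t * measure M V)) \<le> ennreal F"
      using wn t mV by (simp add: ennreal_mult)
    then have "measure M V powr (-1 + 1/p) * (t * measure M V) \<le> F" using F by simp
    moreover have "measure M V powr (-1 + 1/p) * (t * measure M V) = t * measure M V powr (1/p)"
      using mV by (simp add: powr_mult_base mult.commute mult.left_commute)
    ultimately have "measure M V powr (1/p) \<le> F / t" using t by (simp add: field_simps)
    then have "(measure M V powr (1/p)) powr p \<le> (F / t) powr p"
      using p by (intro powr_mono2) auto
    then show ?thesis using p mV F t by (simp add: powr_powr powr_divide)
  qed
qed

end

locale tree_space = prob_space M for M :: "'a measure" +
  fixes T :: "'a set set" and C :: "'a set \<Rightarrow> 'a set set"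
  assumes tree: "tree_on M T C"
begin

lemma T_sets: "I \<in> T \<Longrightarrow> I \<in> sets M" using tree unfolding tree_on_def by meson
lemma T_pos: "I \<in> T \<Longrightarrow> measure M I > 0" using tree unfolding tree_on_def by meson
lemma space_in_T: "space M \<in> T" using tree unfolding tree_on_def by meson
lemma C_finite: "I \<in> T \<Longrightarrow> finite (C I)" using tree unfolding tree_on_def by meson
lemma C_in_T: "I \<in> T \<Longrightarrow> C I \<subseteq> T" using tree unfolding tree_on_def by meson
lemma C_subset: "I \<in> T \<Longrightarrow> J \<in> C I \<Longrightarrow> J \<subseteq> I" using tree unfolding tree_on_def by meson
lemma C_almost_disjoint: "I \<in> T \<Longrightarrow> pairwise (almost_disjoint M) (C I)"
  using tree unfolding tree_on_def by meson
lemma C_Union: "I \<in> T \<Longrightarrow> \<Union> (C I) = I" using tree unfolding tree_on_def by meson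
lemma T_eq_levels: "T = (\<Union>m. tree_level M C m)" using tree unfolding tree_on_def by meson
lemma levels_shrink: "(\<lambda>m. Sup (measure M ` tree_level M C m)) \<longlonglongrightarrow> 0"
  using tree unfolding tree_on_def by meson

lemma level_subset_T: "tree_level M C m \<subseteq> T" using T_eq_levels by blast

lemma level_finite: "finite (tree_level M C m)"
  by (induction m) (use C_finite level_subset_T in auto)

lemma level_covers: "\<Union> (tree_level M C m) = space M"
proof (induction m)
  case (Suc m)
  have "\<Union> (tree_level M C (Suc m)) = (\<Union>I\<in>tree_level M C m. \<Union> (C I))" by auto
  also have "\<dots> = (\<Union>I\<in>tree_level M C m. I)"
    by (rule SUP_cong[OF refl]) (use C_Union level_subset_T in blast)
  finally show ?case using Suc by simp
qed simp

lemma T_countable: "countable T"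
  by (subst T_eq_levels, rule countable_UN) (auto intro: countable_finite level_finite)

lemma descendants_in_T: "K \<in> T \<Longrightarrow> I \<in> descendants C K n \<Longrightarrow> I \<in> T \<and> I \<subseteq> K"
proof (induction n arbitrary: K)
  case (Suc n)
  then obtain J where J: "J \<in> C K" "I \<in> descendants C J n" by auto
  have "J \<in> T" "J \<subseteq> K" using J Suc.prems C_in_T C_subset by auto
  then show ?case using Suc.IH[OF \<open>J \<in> T\<close> J(2)] by auto
qed simp

lemma T_descendant_of_space: "I \<in> T \<Longrightarrow> \<exists>m. I \<in> descendants C (space M) m"
  using T_eq_levels tree_level_eq_descendants by blast

lemma descendant_subset_stop_union:
  "K \<in> T \<Longrightarrow> I \<in> descendants C K n \<Longrightarrow> I \<in> G \<Longrightarrow> I \<subseteq> stop_union G C K n"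
proof (induction n arbitrary: K)
  case (Suc n)
  show ?case
  proof (cases "K \<in> G")
    case True then show ?thesis using descendants_in_T[OF Suc.prems(1,2)] by simp
  next
    case False
    from Suc.prems obtain J where J: "J \<in> C K" "I \<in> descendants C J n" by auto
    then have "I \<subseteq> stop_union G C J n" using Suc C_in_T by blast
    then show ?thesis using False J by auto
  qed
qed simp

text \<open>If every selected set has g-average at least t, so does every stopping union:
  it is an almost disjoint union of selected sets.\<close>
lemma stop_union_average:
  fixes g :: "'a \<Rightarrow> ennreal" and t :: real
  assumes g: "g \<in> borel_measurable M" and K: "K \<in> T"
    and G: "\<And>I. I \<in> G \<Longrightarrow> ennreal t * emeasure M I \<le> (\<integral>\<^sup>+ y \<in> I. g y \<partial>M)"
  shows "stop_union G C K n \<in> sets M \<and> stop_union G C K n \<subseteq> K \<and>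
    ennreal t * emeasure M (stop_union G C K n) \<le> (\<integral>\<^sup>+ y \<in> stop_union G C K n. g y \<partial>M)"
  using K
proof (induction n arbitrary: K)
  case 0 then show ?case using T_sets G by auto
next
  case (Suc n)
  show ?case
  proof (cases "K \<in> G")
    case True then show ?thesis using T_sets G Suc.prems by auto
  next
    case False
    define A where "A J = stop_union G C J n" for J
    have union: "stop_union G C K (Suc n) = (\<Union>J\<in>C K. A J)" using False by (simp add: A_def)
    have fin: "finite (C K)" using C_finite Suc.prems by auto
    have IH: "A J \<in> sets M" "A J \<subseteq> J" "ennreal t * emeasure M (A J) \<le> (\<integral>\<^sup>+ y \<in> A J. g y \<partial>M)"
      if "J \<in> C K" for J using Suc.IH C_in_T Suc.prems that unfolding A_def by blast+
    have null: "A I \<inter> A J \<in> null_sets M" if "I \<in> C K" "J \<in> C K" "I \<noteq> J" for I J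
    proof (rule null_sets_subset)
      have "I \<in> sets M" "J \<in> sets M" using that T_sets C_in_T Suc.prems by blast+
      then show "I \<inter> J \<in> null_sets M"
        using C_almost_disjoint[OF Suc.prems] that
        by (auto simp: almost_disjoint_def pairwise_def intro!: null_setsI)
      show "A I \<inter> A J \<in> sets M" "A I \<inter> A J \<subseteq> I \<inter> J" using IH that by auto
    qed
    have "ennreal t * emeasure M (\<Union>J\<in>C K. A J) \<le> ennreal t * (\<Sum>J\<in>C K. emeasure M (A J))"
      using fin IH by (intro mult_left_mono emeasure_subadditive_finite) auto
    also have "\<dots> = (\<Sum>J\<in>C K. ennreal t * emeasure M (A J))" by (simp add: sum_distrib_left)
    also have "\<dots> \<le> (\<Sum>J\<in>C K. \<integral>\<^sup>+ y \<in> A J. g y \<partial>M)" using IH by (intro sum_mono) auto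
    also have "\<dots> \<le> (\<integral>\<^sup>+ y \<in> (\<Union>J\<in>C K. A J). g y \<partial>M)"
      using fin IH null g by (intro nn_set_integral_sum_le_UN) auto
    moreover have "(\<Union>J\<in>C K. A J) \<subseteq> K" using IH C_subset Suc.prems by blast
    ultimately show ?thesis using union fin IH by auto
  qed
qed

end

section \<open>The maximal operator\<close>

context tree_space
begin

text \<open>The maximal function as a supremum over the countable tree of measurable functions.\<close>
lemma max_op_eq_SUP_indicator:
  "max_op M T phi x = (SUP I\<in>T. (\<integral>\<^sup>+ y \<in> I. ennreal \<bar>phi y\<bar> \<partial>M) / ennreal (measure M I) * indicator I x)"
  unfolding max_op_def
proof (rule antisym)
  show "(SUP I\<in>{I \<in> T. x \<in> I}. (\<integral>\<^sup>+ y \<in> I. ennreal \<bar>phi y\<bar> \<partial>M) / ennreal (measure M I))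
      \<le> (SUP I\<in>T. (\<integral>\<^sup>+ y \<in> I. ennreal \<bar>phi y\<bar> \<partial>M) / ennreal (measure M I) * indicator I x)"
    by (rule SUP_mono) (auto intro!: bexI)
  show "(SUP I\<in>T. (\<integral>\<^sup>+ y \<in> I. ennreal \<bar>phi y\<bar> \<partial>M) / ennreal (measure M I) * indicator I x)
      \<le> (SUP I\<in>{I \<in> T. x \<in> I}. (\<integral>\<^sup>+ y \<in> I. ennreal \<bar>phi y\<bar> \<partial>M) / ennreal (measure M I))"
    by (rule SUP_least) (auto intro!: SUP_upper simp: indicator_def)
qed

lemma max_op_measurable:
  assumes "phi \<in> borel_measurable M"
  shows "max_op M T phi \<in> borel_measurable M"
proof -
  have "max_op M T phi = (\<lambda>x. SUP I\<in>T. (\<integral>\<^sup>+ y \<in> I. ennreal \<bar>phi y\<bar> \<partial>M) / ennreal (measure M I) * indicator I x)"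
    by (rule ext) (rule max_op_eq_SUP_indicator)
  also have "\<dots> \<in> borel_measurable M"
    using T_countable T_sets by (intro borel_measurable_SUP) auto
  finally show ?thesis .
qed

lemma level_set_sets:
  assumes "phi \<in> borel_measurable M"
  shows "level_set M T phi lam \<in> sets M"
proof -
  have [measurable]: "max_op M T phi \<in> borel_measurable M" using assms by (rule max_op_measurable)
  show ?thesis unfolding level_set_def by measurable
qed

lemma average_le_max_op:
  assumes I: "I \<in> T" "x \<in> I" and c: "c \<ge> 0"
    and avg: "ennreal (c * measure M I) \<le> (\<integral>\<^sup>+ y \<in> I. ennreal \<bar>phi y\<bar> \<partial>M)"
  shows "ennreal c \<le> max_op M T phi x"
proof -
  have "ennreal c = ennreal (c * measure M I) / ennreal (measure M I)"
    using T_pos[OF I(1)] c by (simp add: divide_ennreal)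
  also have "\<dots> \<le> (\<integral>\<^sup>+ y \<in> I. ennreal \<bar>phi y\<bar> \<partial>M) / ennreal (measure M I)"
    using avg by (rule divide_right_mono_ennreal)
  also have "\<dots> \<le> max_op M T phi x" unfolding max_op_def using I by (intro SUP_upper) simp
  finally show ?thesis .
qed

lemma max_op_gt_imp_average:
  assumes "ennreal t < max_op M T phi x"
  obtains I where "I \<in> T" "x \<in> I"
    "ennreal t * emeasure M I \<le> (\<integral>\<^sup>+ y \<in> I. ennreal \<bar>phi y\<bar> \<partial>M)"
proof -
  obtain I where I: "I \<in> T" "x \<in> I"
    and lt: "ennreal t < (\<integral>\<^sup>+ y \<in> I. ennreal \<bar>phi y\<bar> \<partial>M) / ennreal (measure M I)"
    using assms unfolding max_op_def by (auto simp: less_SUP_iff)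
  have mI: "measure M I > 0" using T_pos I by auto
  have "ennreal t * ennreal (measure M I)
      \<le> (\<integral>\<^sup>+ y \<in> I. ennreal \<bar>phi y\<bar> \<partial>M) / ennreal (measure M I) * ennreal (measure M I)"
    using lt by (intro mult_right_mono) auto
  also have "\<dots> = (\<integral>\<^sup>+ y \<in> I. ennreal \<bar>phi y\<bar> \<partial>M)" using mI by (simp add: ennreal_divide_times)
  finally show ?thesis using that I by (simp add: emeasure_eq_measure)
qed

section \<open>Upper bound for the Bellman function\<close>

text \<open>For t < lam the level set lies in the increasing union of the stopping unions of the
  sets with average at least t, each of which satisfies the weak-type bounds.\<close>
lemma level_set_bound_below:
  fixes f F p t lam :: real
  assumes adm: "admissible M p f F phi" and p: "p > 1" and f: "f \<ge> 0" and F: "F \<ge> 0"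
    and t: "t > 0" "t < lam"
  shows "measure M (level_set M T phi lam) \<le> f / t \<and>
         measure M (level_set M T phi lam) \<le> F powr p / t powr p"
proof -
  have [measurable]: "phi \<in> borel_measurable M" using adm by (simp add: admissible_def)
  define G where "G = {I \<in> T. ennreal t * emeasure M I \<le> (\<integral>\<^sup>+ y \<in> I. ennreal \<bar>phi y\<bar> \<partial>M)}"
  define V where "V n = stop_union G C (space M) n" for n
  have V: "V n \<in> sets M" "ennreal t * emeasure M (V n) \<le> (\<integral>\<^sup>+ y \<in> V n. ennreal \<bar>phi y\<bar> \<partial>M)" for n
    using stop_union_average[OF _ space_in_T, of "\<lambda>y. ennreal \<bar>phi y\<bar>" G t n]
    unfolding V_def G_def by auto
  have covered: "level_set M T phi lam \<subseteq> (\<Union>n. V n)"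
  proof
    fix x assume "x \<in> level_set M T phi lam"
    moreover have "ennreal t < ennreal lam" using t by (simp add: ennreal_lessI)
    ultimately have "ennreal t < max_op M T phi x"
      by (auto simp: level_set_def intro: order.strict_trans2)
    then obtain I where I: "I \<in> T" "x \<in> I" and "I \<in> G"
      by (auto elim: max_op_gt_imp_average simp: G_def)
    obtain m where "I \<in> descendants C (space M) m" using T_descendant_of_space I by blast
    then have "I \<subseteq> V m" unfolding V_def using descendant_subset_stop_union[OF space_in_T] \<open>I \<in> G\<close> by blast
    then show "x \<in> (\<Union>n. V n)" using I by blast
  qed
  have lim: "(\<lambda>n. measure M (V n)) \<longlonglongrightarrow> measure M (\<Union>n. V n)"
    using V stop_union_incseq unfolding V_def by (intro finite_Lim_measure_incseq) auto
  have "measure M (\<Union>n. V n) \<le> f / t" "measure M (\<Union>n. V n) \<le> F powr p / t powr p"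
    using weak_type_bounds[OF adm p f F t(1) V] by (auto intro: LIMSEQ_le_const2[OF lim])
  moreover have "measure M (level_set M T phi lam) \<le> measure M (\<Union>n. V n)"
    using covered V by (intro finite_measure_mono) auto
  ultimately show ?thesis by linarith
qed

text \<open>Letting t tend to lam gives the upper bound for every admissible function.\<close>
lemma level_set_bound:
  fixes f F p lam :: real
  assumes adm: "admissible M p f F phi" and p: "p > 1" and f: "f \<ge> 0" and F: "F \<ge> 0"
    and lam: "lam > 0"
  shows "measure M (level_set M T phi lam) \<le> min 1 (min (f / lam) (F powr p / lam powr p))"
proof -
  define m where "m = measure M (level_set M T phi lam)"
  have below: "eventually (\<lambda>t. m \<le> f / t \<and> m \<le> F powr p / t powr p) (at_left lam)"
    using eventually_at_left_real[OF lam]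
    by (rule eventually_mono) (use level_set_bound_below[OF adm p f F] in \<open>auto simp: m_def\<close>)
  have "m \<le> f / lam"
  proof (rule tendsto_le[of "at_left lam"])
    show "((\<lambda>t. f / t) \<longlongrightarrow> f / lam) (at_left lam)" using lam by (auto intro!: tendsto_eq_intros)
    show "\<forall>\<^sub>F t in at_left lam. m \<le> f / t" using below by (rule eventually_mono) simp
  qed auto
  moreover have "m \<le> F powr p / lam powr p"
  proof (rule tendsto_le[of "at_left lam"])
    show "((\<lambda>t. F powr p / t powr p) \<longlongrightarrow> F powr p / lam powr p) (at_left lam)"
      using lam by (auto intro!: tendsto_eq_intros)
    show "\<forall>\<^sub>F t in at_left lam. m \<le> F powr p / t powr p" using below by (rule eventually_mono) simp
  qed auto
  moreover have "m \<le> 1" unfolding m_def by (rule prob_le_1)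
  ultimately show ?thesis unfolding m_def by simp
qed

end

section \<open>Extremal functions\<close>

context prob_space
begin

lemma constant_admissible:
  fixes p f F :: real
  assumes p: "p > 1" and f: "0 < f" "f \<le> F"
  shows "admissible M p f F (\<lambda>_. f)"
  unfolding admissible_def
proof (intro conjI ballI)
  show "(\<integral>\<^sup>+ x. ennreal f \<partial>M) = ennreal f" by (simp add: emeasure_space_1)
  show "weak_norm M p (\<lambda>_. f) \<le> ennreal F"
    unfolding weak_norm_def
  proof (rule SUP_least)
    fix A assume "A \<in> {E \<in> sets M. measure M E > 0}"
    then have A: "A \<in> sets M" and mA: "measure M A > 0" by auto
    have "measure M A powr (-1 + 1/p) * (f * measure M A) = f * measure M A powr (1/p)"
      using mA by (simp add: powr_mult_base mult.commute mult.left_commute)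
    also have "\<dots> \<le> f * 1" using p mA prob_le_1[of A] f by (intro mult_left_mono powr_le1) auto
    also have "\<dots> \<le> F" using f by simp
    finally have "measure M A powr (-1 + 1/p) * (f * measure M A) \<le> F" .
    then show "ennreal (measure M A powr (-1 + 1/p)) * (\<integral>\<^sup>+ y \<in> A. ennreal \<bar>f\<bar> \<partial>M) \<le> ennreal F"
      using A f mA by (simp add: nn_integral_cmult_indicator emeasure_eq_measure ennreal_mult[symmetric])
  qed
qed (use f in auto)

lemma two_valued_set_integral:
  assumes E: "E \<in> sets M" and A: "A \<in> sets M" and lam: "lam \<ge> 0" and c: "c \<ge> 0"
  shows "(\<integral>\<^sup>+ y \<in> A. ennreal \<bar>if y \<in> E then lam else c\<bar> \<partial>M)
    = ennreal (lam * measure M (A \<inter> E) + c * measure M (A - E))"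
proof -
  have "(\<integral>\<^sup>+ y \<in> A. ennreal \<bar>if y \<in> E then lam else c\<bar> \<partial>M) =
      (\<integral>\<^sup>+ y. ennreal lam * indicator (A \<inter> E) y + ennreal c * indicator (A - E) y \<partial>M)"
    using lam c by (intro nn_integral_cong) (auto simp: indicator_def)
  also have "\<dots> = ennreal lam * emeasure M (A \<inter> E) + ennreal c * emeasure M (A - E)"
    using E A by (simp add: nn_integral_add nn_integral_cmult_indicator)
  also have "\<dots> = ennreal (lam * measure M (A \<inter> E) + c * measure M (A - E))"
    using lam c by (simp add: emeasure_eq_measure ennreal_mult ennreal_plus[symmetric])
  finally show ?thesis .
qed

lemma two_valued_admissible:
  fixes p f F lam b c :: real
  assumes p: "p > 1" and f: "0 < f" "f \<le> F" "f < lam"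
    and E: "E \<in> sets M" and b: "measure M E = b" "0 < b"
    and b_le: "b \<le> f / lam" "b \<le> F powr p / lam powr p"
    and c_def: "c = (f - lam * b) / (1 - b)"
  shows "admissible M p f F (\<lambda>x. if x \<in> E then lam else c)"
proof -
  have lam: "lam > 0" using f by simp
  have lam_b: "lam * b \<le> f" using b_le(1) lam by (simp add: le_divide_eq mult.commute)
  have b1: "b < 1" using lam_b f lam b by (smt (verit) mult_le_cancel_left1)
  have c0: "0 \<le> c" using lam_b b1 by (simp add: c_def)
  have c_lam: "c \<le> lam" using b1 f by (simp add: c_def divide_le_eq algebra_simps)
  have f_eq: "lam * b + c * (1 - b) = f" using b1 by (simp add: c_def)
  have bF: "lam * b powr (1/p) \<le> F"
  proof -
    have "b powr (1/p) \<le> (F powr p / lam powr p) powr (1/p)"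
      using b_le(2) b p by (intro powr_mono2) auto
    also have "\<dots> = F / lam" using p lam f by (simp add: powr_divide[symmetric] powr_powr)
    finally show ?thesis using lam by (simp add: field_simps)
  qed
  let ?phi = "\<lambda>x. if x \<in> E then lam else c"
  have int: "(\<integral>\<^sup>+ x. ennreal (?phi x) \<partial>M) = ennreal f"
  proof -
    have "(\<integral>\<^sup>+ x. ennreal (?phi x) \<partial>M) = (\<integral>\<^sup>+ y \<in> space M. ennreal \<bar>?phi y\<bar> \<partial>M)"
      using lam c0 by (intro nn_integral_cong) auto
    also have "\<dots> = ennreal (lam * measure M (space M \<inter> E) + c * measure M (space M - E))"
      using E lam c0 by (intro two_valued_set_integral) auto
    also have "space M \<inter> E = E" using E sets.sets_into_space by blast
    also have "measure M (space M - E) = 1 - b" using prob_compl[OF E] b by simp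
    finally show ?thesis using f_eq b by simp
  qed
  have wn: "weak_norm M p ?phi \<le> ennreal F"
    unfolding weak_norm_def
  proof (rule SUP_least)
    fix A assume "A \<in> {E \<in> sets M. measure M E > 0}"
    then have A: "A \<in> sets M" and mA: "measure M A > 0" by auto
    define a where "a = measure M (A \<inter> E)"
    define d where "d = measure M (A - E)"
    have ad: "measure M A = a + d"
      unfolding a_def d_def using A E finite_measure_Union[of "A \<inter> E" "A - E"] by (auto simp: Int_Diff_Un)
    have a: "0 \<le> a" "a \<le> b" using E b by (auto simp: a_def intro: finite_measure_mono)
    have "ennreal (measure M A powr (-1 + 1/p)) * (\<integral>\<^sup>+ y \<in> A. ennreal \<bar>?phi y\<bar> \<partial>M)
        = ennreal ((a + d) powr (-1 + 1/p) * (lam * a + c * d))"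
      using two_valued_set_integral[OF E A] ad lam c0 a
      unfolding a_def d_def by (simp add: ennreal_mult)
    also have "\<dots> \<le> ennreal F"
      using two_level_weak_bound[OF p c0 c_lam b(2) b1 f_eq f(2) bF a] mA ad prob_le_1[of A]
      by (intro ennreal_leI) (simp add: d_def)
    finally show "ennreal (measure M A powr (-1 + 1/p)) * (\<integral>\<^sup>+ y \<in> A. ennreal \<bar>?phi y\<bar> \<partial>M) \<le> ennreal F" .
  qed
  show ?thesis
    unfolding admissible_def using int wn E lam c0 by auto
qed

end

lemma crossing_index:
  fixes s :: "nat \<Rightarrow> real"
  assumes "s 0 \<le> \<beta>" "\<forall>i<n. s (Suc i) < s i + \<epsilon>" "\<beta> < s n"
  shows "\<exists>i<n. \<beta> - \<epsilon> < s i \<and> s i \<le> \<beta>"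
  using assms
proof (induction n)
  case (Suc n)
  show ?case
  proof (cases "s n \<le> \<beta>")
    case True
    then show ?thesis using Suc.prems(2,3) by (intro exI[of _ n]) auto
  next
    case False
    then show ?thesis using Suc by (metis less_Suc_eq not_le)
  qed
qed simp

section \<open>Lower bound for the Bellman function\<close>

context tree_space
begin

text \<open>Since the levels of the tree become arbitrarily fine, finite unions of tree sets
  approximate every measure in (0, 1) from below.\<close>
lemma finite_union_approx:
  assumes "0 < \<beta>" "\<beta> < 1" "0 < \<epsilon>"
  obtains L where "L \<subseteq> T" "finite L" "\<beta> - \<epsilon> < measure M (\<Union>L)" "measure M (\<Union>L) \<le> \<beta>"
proof -
  obtain m where m: "Sup (measure M ` tree_level M C m) < \<epsilon>"
    using order_tendstoD(2)[OF levels_shrink assms(3)] by (auto simp: eventually_sequentially)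
  have small: "measure M J < \<epsilon>" if "J \<in> tree_level M C m" for J
  proof -
    have "measure M J \<le> Sup (measure M ` tree_level M C m)"
      using that level_finite by (intro cSup_upper bdd_above_finite) auto
    then show ?thesis using m by simp
  qed
  obtain xs where xs: "set xs = tree_level M C m" using level_finite finite_list by blast
  have xs_T: "set (take i xs) \<subseteq> T" for i using set_take_subset[of i xs] xs level_subset_T by blast
  define s where "s i = measure M (\<Union>(set (take i xs)))" for i
  have step: "\<forall>i<length xs. s (Suc i) < s i + \<epsilon>"
  proof (intro allI impI)
    fix i assume i: "i < length xs"
    have xi: "xs ! i \<in> tree_level M C m" using i xs nth_mem by blast
    have "s (Suc i) = measure M (\<Union>(set (take i xs)) \<union> xs ! i)"
      using i by (simp add: s_def take_Suc_conv_app_nth Un_commute)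
    also have "\<dots> \<le> s i + measure M (xs ! i)"
      unfolding s_def using xi
      by (intro measure_Un_le sets.finite_Union)
        (auto intro: T_sets[OF subsetD[OF xs_T]] T_sets[OF subsetD[OF level_subset_T]])
    finally show "s (Suc i) < s i + \<epsilon>" using small[OF xi] by simp
  qed
  have "s (length xs) = 1" unfolding s_def using xs level_covers[of m] prob_space by simp
  then obtain i where "\<beta> - \<epsilon> < s i \<and> s i \<le> \<beta>"
    using crossing_index[of s \<beta> "length xs" \<epsilon>] step assms by (auto simp: s_def)
  then show ?thesis using that[OF xs_T finite_set] unfolding s_def by blast
qed

lemma tree_set_subset_level_set:
  assumes J: "J \<in> T" and lam: "lam \<ge> 0" and ge: "\<And>y. y \<in> J \<Longrightarrow> lam \<le> phi y"
  shows "J \<subseteq> level_set M T phi lam"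
proof
  fix x assume x: "x \<in> J"
  have "ennreal (lam * measure M J) = (\<integral>\<^sup>+ y \<in> J. ennreal lam \<partial>M)"
    using T_sets[OF J] lam by (simp add: nn_integral_cmult_indicator emeasure_eq_measure ennreal_mult)
  also have "\<dots> \<le> (\<integral>\<^sup>+ y \<in> J. ennreal \<bar>phi y\<bar> \<partial>M)"
    using ge lam by (intro nn_integral_mono) (force simp: indicator_def)
  finally have "ennreal lam \<le> max_op M T phi x" using average_le_max_op[OF J x lam] by blast
  moreover have "x \<in> space M" using x T_sets[OF J] sets.sets_into_space by blast
  ultimately show "x \<in> level_set M T phi lam" by (simp add: level_set_def)
qed

lemma exists_admissible_above:
  fixes p f F lam y :: real
  assumes p: "p > 1" and f: "0 < f" "f \<le> F" and lam: "lam > 0"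
    and y: "y < min 1 (min (f / lam) (F powr p / lam powr p))"
  shows "\<exists>phi. admissible M p f F phi \<and> y < measure M (level_set M T phi lam)"
proof (cases "lam \<le> f")
  case True
  have "space M \<subseteq> level_set M T (\<lambda>_. f) lam"
    using True lam by (intro tree_set_subset_level_set space_in_T) auto
  then have "level_set M T (\<lambda>_. f) lam = space M" by (auto simp: level_set_def)
  then show ?thesis using constant_admissible[OF p f] y prob_space by (intro exI[of _ "\<lambda>_. f"]) auto
next
  case False
  define \<beta> where "\<beta> = min (f / lam) (F powr p / lam powr p)"
  have "\<beta> \<le> f / lam" "f / lam < 1" using False lam by (auto simp: \<beta>_def)
  moreover have "0 < \<beta>" "y < \<beta>" using f lam y by (auto simp: \<beta>_def)
  ultimately have \<beta>: "0 < \<beta>" "\<beta> < 1" "y < \<beta>" by linarith+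
  define \<epsilon> where "\<epsilon> = min (\<beta> - y) \<beta>"
  have \<epsilon>: "0 < \<epsilon>" "\<beta> - \<epsilon> = max y 0" using \<beta> by (auto simp: \<epsilon>_def)
  obtain L where L: "L \<subseteq> T" "finite L" "max y 0 < measure M (\<Union>L)" "measure M (\<Union>L) \<le> \<beta>"
    using finite_union_approx[OF \<beta>(1,2) \<epsilon>(1)] unfolding \<epsilon>(2) by blast
  define b where "b = measure M (\<Union>L)"
  let ?phi = "\<lambda>x. if x \<in> \<Union>L then lam else (f - lam * b) / (1 - b)"
  have E: "\<Union>L \<in> sets M" using L T_sets by (intro sets.finite_Union) auto
  have adm: "admissible M p f F ?phi"
    using False L(3,4) by (intro two_valued_admissible[OF p f _ E]) (auto simp: b_def \<beta>_def)
  have "J \<subseteq> level_set M T ?phi lam" if "J \<in> L" for J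
    using that L(1) lam by (intro tree_set_subset_level_set) auto
  then have sub: "\<Union>L \<subseteq> level_set M T ?phi lam" by blast
  have "?phi \<in> borel_measurable M" using adm by (simp add: admissible_def)
  from finite_measure_mono[OF sub level_set_sets[OF this]]
  have "b \<le> measure M (level_set M T ?phi lam)" unfolding b_def .
  then show ?thesis using adm L(3) b_def by (intro exI[of _ ?phi]) auto
qed

end

theorem theorem3p1:
  fixes M :: "'a measure" and T :: "'a set set" and C :: "'a set \<Rightarrow> 'a set set"
    and p f F lam :: real
  assumes "prob_space M" and "nonatomic M" and "tree_on M T C"
    and "p > 1" and "0 < f" and "f \<le> F" and "lam > 0"
  shows "Bellman M T p f F lam = min 1 (min (f / lam) (F powr p / lam powr p))"
proof -
  interpret tree_space M T C using assms(1,3) by (simp add: tree_space_def tree_space_axioms_def)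
  let ?v = "min 1 (min (f / lam) (F powr p / lam powr p))"
  let ?h = "\<lambda>\<phi>. measure M (level_set M T \<phi> lam)"
  have "Sup (?h ` Collect (admissible M p f F)) = ?v"
  proof (rule cSup_eq_non_empty)
    show "?h ` Collect (admissible M p f F) \<noteq> {}" using constant_admissible assms by blast
    show "x \<le> ?v" if "x \<in> ?h ` Collect (admissible M p f F)" for x
      using that level_set_bound assms by force
    show "?v \<le> y" if "\<And>x. x \<in> ?h ` Collect (admissible M p f F) \<Longrightarrow> x \<le> y" for y
      using that exists_admissible_above[OF assms(4-7), of y] by (force simp: not_le[symmetric])
  qed
  then show ?thesis by (simp add: Bellman_eq_Sup_admissible)
qed

end
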